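(* Let $n\in\mathbb{N}_0$ and $\alpha>0$. For $u,v$ in the open unit disk $\mathbb{D}=\{u\in\mathbb{C}:|u|<1\}$ with $u\neq v$ define $$H_n^\alpha(u,v)=\frac{|u|^{2n}\,|1-\overline{u}v|^{2(n+\alpha+1)}}{|u-v|^{2n}\,(1-|v|^2)^{\alpha+1}}.$$ Let $0<R<1$, let $v\in(0,1)$ be a positive real number with $v<R$, and let $u=|u|e^{-i\varphi}$ with $\varphi\in\mathbb{R}$ and $R\le |u|<1$. If $|\varphi|\le 1-vR$, then $$H_n^\alpha(u,v)\le 2^{n+\alpha+1}\frac{(1-vR)^{2n+\alpha+1}}{(1-v/R)^{2n}}.$$
   Context: Here $\mathbb{N}_0=\{0,1,2,\dots\}$; for $n=0$ the factors with exponent $2n$ are equal to $1$. *)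

theory Defs
  imports "HOL-Analysis.Analysis"
begin

definition H :: "nat \<Rightarrow> real \<Rightarrow> complex \<Rightarrow> complex \<Rightarrow> real" where
  "H n \<alpha> u v =
     (cmod u ^ (2*n) * cmod (1 - cnj u * v) powr (2 * (real n + \<alpha> + 1)))
     / (cmod (u - v) ^ (2*n) * (1 - cmod v ^ 2) powr (\<alpha> + 1))"

end

theory Submission
  imports Defs
begin

text \<open>Write u = r e^(-i \<phi>) with r = |u|. The reverse triangle inequality gives
  |u - v| \<ge> r - v \<ge> r (1 - v/R), which controls the factor (|u| / |u - v|)^(2n). For the
  other factor, |1 - conj(u) v|^2 = (1 - r v)^2 + 2 r v (1 - cos \<phi>), and 1 - cos \<phi> \<le> \<phi>^2/2
  turns the hypothesis on \<phi> into |1 - conj(u) v|^2 \<le> 2 (1 - v R)^2. The surplus power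
  (1 - v R)^(\<alpha> + 1) is absorbed by (1 - v^2)^(\<alpha> + 1) because v < R.\<close>

lemma one_minus_cos_le: "1 - cos x \<le> x\<^sup>2 / 2"
  for x :: real
proof -
  have "cos x = 1 - 2 * (sin (x / 2))\<^sup>2"
    using cos_double_sin[of "x / 2"] by simp
  moreover have "(sin (x / 2))\<^sup>2 \<le> (x / 2)\<^sup>2"
    using abs_sin_x_le_abs_x[of "x / 2"] by (metis abs_ge_zero power2_abs power_mono)
  ultimately show ?thesis
    by (simp add: power_divide)
qed

lemma power2_powr:
  fixes x a :: real
  assumes "0 \<le> x"
  shows "(x\<^sup>2) powr a = x powr (2 * a)"
proof (cases "x = 0")
  case False
  with assms have "x\<^sup>2 = x powr 2"
    by (simp add: powr_realpow[of x 2, simplified])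
  then show ?thesis
    by (simp add: powr_powr)
qed simp

lemma H_eq:
  "H n \<alpha> u v = (cmod u / cmod (u - v)) ^ (2 * n)
     * (cmod (1 - cnj u * v))\<^sup>2 powr (real n + \<alpha> + 1) / (1 - (cmod v)\<^sup>2) powr (\<alpha> + 1)"
  unfolding H_def by (simp add: power2_powr power_divide)

lemma norm_div_norm_diff_le:
  fixes u :: complex and v R :: real
  assumes "0 < v" "v < R" "R \<le> cmod u"
  shows "cmod u / cmod (u - of_real v) \<le> 1 / (1 - v / R)"
proof -
  have "cmod u - v \<le> cmod (u - of_real v)"
    using norm_triangle_ineq2[of u "of_real v"] assms(1) by simp
  moreover have "0 < cmod u - v"
    using assms by simp
  ultimately have "cmod u / cmod (u - of_real v) \<le> cmod u / (cmod u - v)"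
    by (intro divide_left_mono mult_pos_pos) auto
  also have "\<dots> \<le> R / (R - v)"
    using assms by (simp add: divide_simps algebra_simps mult_left_mono)
  also have "\<dots> = 1 / (1 - v / R)"
    using assms by (simp add: field_simps)
  finally show ?thesis .
qed

lemma norm_one_minus_cnj_polar_mult_of_real:
  fixes u :: complex and r v \<phi> :: real
  assumes "u = of_real r * exp (- \<i> * of_real \<phi>)"
  shows "(cmod (1 - cnj u * of_real v))\<^sup>2 = (1 - r * v)\<^sup>2 + 2 * r * v * (1 - cos \<phi>)"
proof -
  have "(cmod (1 - cnj u * of_real v))\<^sup>2 = (1 - r * v * cos \<phi>)\<^sup>2 + (r * v * sin \<phi>)\<^sup>2"
    using assms by (simp add: cmod_def Re_exp Im_exp mult_ac)
  also have "\<dots> = (1 - r * v)\<^sup>2 + 2 * r * v * (1 - cos \<phi>)"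
    by (simp add: power_mult_distrib sin_squared_eq) (simp add: power2_eq_square algebra_simps)
  finally show ?thesis .
qed

lemma norm_one_minus_cnj_mult_of_real_le:
  fixes u :: complex and R v \<phi> :: real
  assumes u: "u = of_real (cmod u) * exp (- \<i> * of_real \<phi>)"
    and "R \<le> cmod u" "0 \<le> v" "cmod u * v \<le> 1"
    and \<phi>: "\<bar>\<phi>\<bar> \<le> 1 - v * R"
  shows "(cmod (1 - cnj u * of_real v))\<^sup>2 \<le> 2 * (1 - v * R)\<^sup>2"
proof -
  define r where "r = cmod u"
  have rv: "0 \<le> r * v" "r * v \<le> 1" "v * R \<le> r * v"
    using assms mult_left_mono[of R r v] by (simp_all add: r_def mult.commute)
  have "1 - cos \<phi> \<le> (1 - v * R)\<^sup>2 / 2"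
    using one_minus_cos_le[of \<phi>] \<phi> abs_ge_zero power_mono[of "\<bar>\<phi>\<bar>" "1 - v * R" 2]
    by (simp add: power2_abs)
  then have "2 * (r * v) * (1 - cos \<phi>) \<le> 2 * 1 * ((1 - v * R)\<^sup>2 / 2)"
    using rv cos_le_one[of \<phi>] by (intro mult_mono) simp_all
  moreover have "(1 - r * v)\<^sup>2 \<le> (1 - v * R)\<^sup>2"
    using rv by (intro power_mono) simp_all
  ultimately show ?thesis
    using norm_one_minus_cnj_polar_mult_of_real[OF u[folded r_def], of v] by simp
qed

lemma powr_div_powr_le_of_square_bound:
  fixes q x y m a :: real
  assumes "0 \<le> q" "q \<le> 2 * x\<^sup>2" "0 < x" "x \<le> y" "0 \<le> m" "0 \<le> a + 1"
  shows "q powr (m + a + 1) / y powr (a + 1) \<le> 2 powr (m + a + 1) * x powr (2 * m + a + 1)"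
proof -
  have "q powr (m + a + 1) \<le> (2 * x\<^sup>2) powr (m + a + 1)"
    using assms by (intro powr_mono2) simp_all
  also have "\<dots> = 2 powr (m + a + 1) * x powr (2 * m + a + 1) * x powr (a + 1)"
    using assms by (simp add: powr_mult power2_powr flip: powr_add) (simp add: algebra_simps)
  also have "\<dots> \<le> 2 powr (m + a + 1) * x powr (2 * m + a + 1) * y powr (a + 1)"
    using assms by (intro mult_left_mono powr_mono2) simp_all
  finally show ?thesis
    using assms by (simp add: divide_simps)
qed

theorem lemma1:
  fixes n :: nat and \<alpha> R v \<phi> :: real and u :: complex
  assumes "\<alpha> > 0"
    and "0 < R" "R < 1"
    and "0 < v" "v < 1" "v < R"
    and "u = complex_of_real (cmod u) * exp (- \<i> * complex_of_real \<phi>)"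
    and "R \<le> cmod u" "cmod u < 1"
    and "\<bar>\<phi>\<bar> \<le> 1 - v * R"
  shows "H n \<alpha> u (complex_of_real v)
    \<le> 2 powr (real n + \<alpha> + 1) * (1 - v * R) powr (real (2*n) + \<alpha> + 1)
       / (1 - v / R) ^ (2*n)"
proof -
  have "cmod u * v \<le> 1" "v * R < 1" "v\<^sup>2 \<le> v * R"
    using assms mult_strict_mono[of v 1 R 1] mult_left_mono[of v R v]
    by (simp_all add: mult_le_one power2_eq_square)
  then have weight: "(cmod (1 - cnj u * of_real v))\<^sup>2 powr (real n + \<alpha> + 1) / (1 - v\<^sup>2) powr (\<alpha> + 1)
      \<le> 2 powr (real n + \<alpha> + 1) * (1 - v * R) powr (2 * real n + \<alpha> + 1)"
    using assms by (intro powr_div_powr_le_of_square_bound norm_one_minus_cnj_mult_of_real_le) auto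
  have ratio: "cmod u / cmod (u - of_real v) \<le> 1 / (1 - v / R)"
    using assms by (intro norm_div_norm_diff_le) auto
  have "H n \<alpha> u (of_real v) = (cmod u / cmod (u - of_real v)) ^ (2 * n)
      * ((cmod (1 - cnj u * of_real v))\<^sup>2 powr (real n + \<alpha> + 1) / (1 - v\<^sup>2) powr (\<alpha> + 1))"
    using assms by (simp add: H_eq)
  also have "\<dots> \<le> (1 / (1 - v / R)) ^ (2 * n)
      * (2 powr (real n + \<alpha> + 1) * (1 - v * R) powr (2 * real n + \<alpha> + 1))"
    using ratio weight by (intro mult_mono power_mono) simp_all
  finally show ?thesis
    by (simp add: power_divide)
qed

end
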